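(* For each $n$, consider the functions ${\operatorname{mr}}_+,\ {\operatorname{mr}}:\mathbf S_{n,+}\to\{0,1,\dots,n\}$ defined by \[{\operatorname{mr}}_+(\Sigma)=\min\{\operatorname{rank}(\hat\Sigma)\mid \Sigma=\tilde\Sigma+\hat\Sigma,\ \tilde\Sigma\ge 0,\ \hat\Sigma\ge 0,\ \tilde\Sigma\text{ diagonal}\},\] \[{\operatorname{mr}}(\Sigma)=\min\{\operatorname{rank}(\hat\Sigma)\mid \Sigma=\tilde\Sigma+\hat\Sigma,\ \hat\Sigma\ge 0,\ \tilde\Sigma\text{ diagonal}\}\] (in the second, $\tilde\Sigma$ is a real diagonal matrix not required to be positive semidefinite). Then ${\operatorname{mr}}_+$ is lower semicontinuous, whereas ${\operatorname{mr}}$ is not lower semicontinuous (in general).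
   Context: $\mathbf S_n$ denotes the real symmetric $n\times n$ matrices and $\mathbf S_{n,+}$ the positive semidefinite ones; $M\ge 0$ means $M$ is positive semidefinite. All matrices $\tilde\Sigma,\hat\Sigma$ are real symmetric $n\times n$. *)

theory Defs
  imports "HOL-Analysis.Analysis" "HOL-Library.Numeral_Type"
begin

definition symmetric_mat :: "real^'n^'n \<Rightarrow> bool" where
  "symmetric_mat A \<longleftrightarrow> transpose A = A"

definition psd :: "real^'n^'n \<Rightarrow> bool" where
  "psd A \<longleftrightarrow> symmetric_mat A \<and> (\<forall>x. 0 \<le> x \<bullet> (A *v x))"

definition diagonal_mat :: "real^'n^'n \<Rightarrow> bool" where
  "diagonal_mat A \<longleftrightarrow> (\<forall>i j. i \<noteq> j \<longrightarrow> A $ i $ j = 0)"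

definition psd_set :: "(real^'n^'n) set" where
  "psd_set = {A. psd A}"

definition mr_plus :: "real^'n^'n \<Rightarrow> nat" where
  "mr_plus S = Min {rank H | D H. S = D + H \<and> psd D \<and> psd H \<and> diagonal_mat D}"

definition mr :: "real^'n^'n \<Rightarrow> nat" where
  "mr S = Min {rank H | D H. S = D + H \<and> psd H \<and> diagonal_mat D}"

definition lower_semicontinuous_on :: "'a::topological_space set \<Rightarrow> ('a \<Rightarrow> real) \<Rightarrow> bool" where
  "lower_semicontinuous_on S f \<longleftrightarrow>
     (\<forall>x\<in>S. \<forall>t. t < f x \<longrightarrow> (\<forall>\<^sub>F y in at x within S. t < f y))"

end

theory Submission imports Defs begin

text \<open>
  Lower semicontinuity of \<open>mr\<^sub>+\<close> is a compactness argument. If \<open>\<Sigma>\<^sub>k \<rightarrow> \<Sigma>\<close> and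
  \<open>\<Sigma>\<^sub>k = D\<^sub>k + H\<^sub>k\<close> are optimal decompositions, the diagonal parts are bounded because
  \<open>0 \<le> D\<^sub>k \<le> \<Sigma>\<^sub>k\<close> entrywise on the diagonal; a subsequence converges to a decomposition
  \<open>\<Sigma> = D + H\<close> of the same kind, and rank is lower semicontinuous, so
  \<open>mr\<^sub>+ \<Sigma> \<le> rank H \<le> rank H\<^sub>k = mr\<^sub>+ \<Sigma>\<^sub>k\<close> for some \<open>k\<close>.
  Without the sign constraint the diagonal parts may escape to infinity, and this happens for
  \<open>\<Sigma>(a) = [[3,a,1],[a,3,1],[1,1,3]]\<close>: for \<open>a > 0\<close> its off-diagonal part is that of the rank-one
  matrix \<open>v v\<^sup>T\<close> with \<open>v = (\<surd>a, \<surd>a, 1/\<surd>a)\<close>, so \<open>mr \<Sigma>(a) \<le> 1\<close>, whereas every matrix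
  differing from \<open>\<Sigma>(0)\<close> only on the diagonal has two independent columns, so \<open>mr \<Sigma>(0) \<ge> 2\<close>.
\<close>

lemma lower_semicontinuous_onI_sequentially:
  fixes f :: "'a::first_countable_topology \<Rightarrow> real"
  assumes "\<And>x g. x \<in> S \<Longrightarrow> (\<And>k. g k \<in> S) \<Longrightarrow> g \<longlonglongrightarrow> x \<Longrightarrow> \<exists>k. f x \<le> f (g k)"
  shows "lower_semicontinuous_on S f"
  unfolding lower_semicontinuous_on_def
proof (intro ballI allI impI)
  fix x t assume x: "x \<in> S" and t: "t < f x"
  show "\<forall>\<^sub>F y in at x within S. t < f y"
  proof (rule sequentially_imp_eventually_within, intro allI impI)
    fix g assume g: "(\<forall>n. g n \<in> S \<and> g n \<noteq> x) \<and> g \<longlonglongrightarrow> x"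
    show "\<forall>\<^sub>F n in sequentially. t < f (g n)"
    proof (rule ccontr)
      assume "\<not> (\<forall>\<^sub>F n in sequentially. t < f (g n))"
      then have "infinite {n. f (g n) \<le> t}"
        by (simp add: cofinite_eq_sequentially[symmetric] eventually_cofinite not_less)
      then obtain r :: "nat \<Rightarrow> nat" where r: "strict_mono r" "\<And>k. f (g (r k)) \<le> t"
        using infinite_enumerate by blast
      have "\<exists>k. f x \<le> f ((g \<circ> r) k)"
      proof (rule assms[OF x])
        show "(g \<circ> r) k \<in> S" for k using g by simp
        show "(g \<circ> r) \<longlonglongrightarrow> x" using g r(1) by (intro LIMSEQ_subseq_LIMSEQ) auto
      qed
      then obtain k where "f x \<le> f (g (r k))" by auto
      then show False using r(2)[of k] t by linarith
    qed
  qed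
qed

lemma norm_matrix_vector_mult_le:
  fixes A :: "real^'n^'m"
  shows "norm (A *v x) \<le> real CARD('m) * real CARD('n) * norm A * norm x"
proof -
  have "\<bar>A $ i $ j\<bar> \<le> norm A" for i j
    using component_le_norm_cart[of "A $ i" j] Finite_Cartesian_Product.norm_nth_le[of A i] by linarith
  then have "onorm ((*v) A) \<le> real CARD('m) * real CARD('n) * norm A"
    by (rule onorm_le_matrix_component)
  moreover have "norm (A *v x) \<le> onorm ((*v) A) * norm x"
    by (rule onorm) (rule matrix_vector_mul_bounded_linear)
  ultimately show ?thesis by (meson mult_right_mono norm_ge_zero order_trans)
qed

text \<open>
  \<open>H\<close> is injective on its row space \<open>R\<close>, hence bounded below there by some \<open>e > 0\<close>; a
  perturbation of size \<open>\<ll> e\<close> stays injective on \<open>R\<close>, so its range has dimension at least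
  \<open>dim R = rank H\<close>.
\<close>
lemma eventually_rank_ge:
  fixes H :: "real^'n^'m"
  shows "\<forall>\<^sub>F H' in nhds H. rank H \<le> rank H'"
proof -
  define R where "R = span (rows H)"
  have R: "subspace R" "closed R" unfolding R_def by (auto intro: closed_subspace)
  have "\<forall>x\<in>R. H *v x = 0 \<longrightarrow> x = 0"
    using matrix_vector_mul_injective_on_rowspace[of H _ 0] unfolding R_def
    by (metis matrix_vector_mult_0_right span_zero)
  then obtain e where e: "e > 0" "\<And>x. x \<in> R \<Longrightarrow> e * norm x \<le> norm (H *v x)"
    using injective_imp_isometric[OF R(2) R(1) matrix_vector_mul_bounded_linear] by blast
  define C where "C = real CARD('m) * real CARD('n)"
  have C: "C > 0" unfolding C_def by simp
  have "rank H \<le> rank H'" if close: "dist H' H < e / C" for H'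
  proof -
    have kernel: "x = 0" if "x \<in> R" "H' *v x = 0" for x
    proof (rule ccontr)
      assume "x \<noteq> 0"
      have "H *v x = (H - H') *v x" using that(2) by (simp add: matrix_vector_mult_diff_rdistrib)
      then have "norm (H *v x) \<le> C * norm (H - H') * norm x"
        using norm_matrix_vector_mult_le[of "H - H'" x] by (simp add: C_def)
      also have "\<dots> < e * norm x"
        using close \<open>x \<noteq> 0\<close> C by (simp add: dist_norm norm_minus_commute field_simps)
      finally show False using e(2) that(1) by fastforce
    qed
    have "inj_on ((*v) H') (span R)"
    proof (rule inj_onI)
      fix x y assume "x \<in> span R" "y \<in> span R" "H' *v x = H' *v y"
      then have "x - y \<in> R" "H' *v (x - y) = 0"
        using subspace_diff[OF R(1)] span_eq_iff[THEN iffD2, OF R(1)]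
        by (auto simp: matrix_vector_mult_diff_distrib)
      then have "x - y = 0" by (rule kernel)
      then show "x = y" by simp
    qed
    then have "rank H = dim ((*v) H' ` R)"
      using dim_image_eq[OF matrix_vector_mul_linear, of H' R]
      by (simp add: R_def row_rank_def dim_span)
    also have "\<dots> \<le> dim (range ((*v) H'))" by (rule dim_subset) blast
    finally show ?thesis by (simp add: rank_dim_range)
  qed
  then show ?thesis unfolding eventually_nhds_metric using e(1) C by (auto intro!: exI[of _ "e / C"])
qed

lemma closed_psd_set: "closed (psd_set :: (real^'n^'n) set)"
proof -
  have "closed ((\<Inter>i j. {A :: real^'n^'n. A $ i $ j = A $ j $ i}) \<inter>
                (\<Inter>x. {A. 0 \<le> (\<Sum>i\<in>UNIV. x $ i * (\<Sum>j\<in>UNIV. A $ i $ j * x $ j))}))"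
    by (intro closed_Int closed_INT ballI closed_Collect_eq closed_Collect_le continuous_intros)
  moreover have "psd_set = (\<Inter>i j. {A :: real^'n^'n. A $ i $ j = A $ j $ i}) \<inter>
                (\<Inter>x. {A. 0 \<le> (\<Sum>i\<in>UNIV. x $ i * (\<Sum>j\<in>UNIV. A $ i $ j * x $ j))})"
    by (auto simp: psd_set_def psd_def symmetric_mat_def transpose_def vec_eq_iff
                   inner_vec_def matrix_vector_mult_def)
  ultimately show ?thesis by simp
qed

lemma closed_diagonal_mat: "closed {A :: real^'n^'n. diagonal_mat A}"
proof -
  have "closed (\<Inter>i. \<Inter>j\<in>-{i}. {A :: real^'n^'n. A $ i $ j = 0})"
    by (intro closed_INT ballI closed_Collect_eq continuous_intros)
  moreover have "{A :: real^'n^'n. diagonal_mat A} = (\<Inter>i. \<Inter>j\<in>-{i}. {A. A $ i $ j = 0})"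
    by (auto simp: diagonal_mat_def)
  ultimately show ?thesis by simp
qed

lemma psd_diagonal_entry_nonneg:
  fixes A :: "real^'n^'n"
  assumes "psd A"
  shows "0 \<le> A $ i $ i"
proof -
  have "axis i 1 \<bullet> (A *v axis i 1) = A $ i $ i"
    by (simp add: matrix_vector_mult_basis column_def inner_axis')
  then show ?thesis using assms unfolding psd_def by metis
qed

lemma norm_diagonal_psd_summand_le:
  fixes D H :: "real^'n^'n"
  assumes "psd D" "psd H" "diagonal_mat D"
  shows "norm D \<le> norm (D + H)"
proof (intro norm_le_componentwise_cart)
  fix i j
  show "norm (D $ i $ j) \<le> norm ((D + H) $ i $ j)"
    using psd_diagonal_entry_nonneg[OF assms(1), of i] psd_diagonal_entry_nonneg[OF assms(2), of i]
      assms(3) by (cases "i = j") (auto simp: diagonal_mat_def)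
qed

lemma finite_rank_values: "finite {rank (H :: real^'n^'n) | D H. P D H}"
  by (rule finite_subset[of _ "{..CARD('n)}"]) (auto intro: order_trans[OF rank_bound])

lemma mr_plus_le:
  fixes S :: "real^'n^'n"
  assumes "S = D + H" "psd D" "psd H" "diagonal_mat D"
  shows "mr_plus S \<le> rank H"
  unfolding mr_plus_def by (rule Min_le[OF finite_rank_values]) (use assms in blast)

lemma psd_zero: "psd (0 :: real^'n^'n)"
  by (simp add: psd_def symmetric_mat_def transpose_def vec_eq_iff)

lemma diagonal_mat_zero: "diagonal_mat (0 :: real^'n^'n)"
  by (simp add: diagonal_mat_def)

lemma mr_plus_attained:
  fixes S :: "real^'n^'n"
  assumes "psd S"
  obtains D H where "S = D + H" "psd D" "psd H" "diagonal_mat D" "rank H = mr_plus S"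
proof -
  have "rank S \<in> {rank H | D H. S = D + H \<and> psd D \<and> psd H \<and> diagonal_mat D}"
    using assms psd_zero diagonal_mat_zero by force
  then have "mr_plus S \<in> {rank H | D H. S = D + H \<and> psd D \<and> psd H \<and> diagonal_mat D}"
    unfolding mr_plus_def by (intro Min_in finite_rank_values) auto
  then show ?thesis using that by force
qed

lemma mr_le:
  fixes S :: "real^'n^'n"
  assumes "S = D + H" "psd H" "diagonal_mat D"
  shows "mr S \<le> rank H"
  unfolding mr_def by (rule Min_le[OF finite_rank_values]) (use assms in blast)

lemma mr_ge:
  fixes S :: "real^'n^'n"
  assumes "psd S" "\<And>D H. S = D + H \<Longrightarrow> psd H \<Longrightarrow> diagonal_mat D \<Longrightarrow> r \<le> rank H"
  shows "r \<le> mr S"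
proof -
  have "{rank H | D H. S = D + H \<and> psd H \<and> diagonal_mat D} \<noteq> {}"
    using assms(1) diagonal_mat_zero by force
  then show ?thesis unfolding mr_def using assms(2) by (auto simp: Min_ge_iff[OF finite_rank_values])
qed

lemma mr_plus_limit_le_rank:
  fixes \<Sigma> D H :: "nat \<Rightarrow> real^'n^'n"
  assumes lim: "\<Sigma> \<longlonglongrightarrow> S"
    and decomp: "\<And>k. \<Sigma> k = D k + H k" "\<And>k. psd (D k)" "\<And>k. psd (H k)" "\<And>k. diagonal_mat (D k)"
  shows "\<exists>k. mr_plus S \<le> rank (H k)"
proof -
  obtain B where B: "\<And>k. norm (\<Sigma> k) \<le> B"
    using convergent_imp_bounded[OF lim] by (auto simp: bounded_iff)
  have "norm (D k) \<le> B" for k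
    using norm_diagonal_psd_summand_le[OF decomp(2-4)] B[of k, unfolded decomp(1)] order_trans by blast
  then have "bounded (range D)" by (auto simp: bounded_iff)
  then obtain D\<^sub>0 r where r: "strict_mono r" "(D \<circ> r) \<longlonglongrightarrow> D\<^sub>0"
    using bounded_imp_convergent_subsequence by blast
  have "(\<lambda>k. (\<Sigma> \<circ> r) k - (D \<circ> r) k) \<longlonglongrightarrow> S - D\<^sub>0"
    by (intro tendsto_diff r(2) LIMSEQ_subseq_LIMSEQ[OF lim r(1)])
  then have H_lim: "(H \<circ> r) \<longlonglongrightarrow> S - D\<^sub>0"
    by (simp add: o_def decomp(1))
  note closed_limit = closed_sequential_limits[THEN iffD1, rule_format, OF _ conjI[OF allI]]
  have "psd D\<^sub>0" "diagonal_mat D\<^sub>0" "psd (S - D\<^sub>0)"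
    using closed_limit[OF closed_psd_set _ r(2)] closed_limit[OF closed_diagonal_mat _ r(2)]
      closed_limit[OF closed_psd_set _ H_lim] decomp
    by (auto simp: psd_set_def)
  then have "mr_plus S \<le> rank (S - D\<^sub>0)" by (intro mr_plus_le) auto
  moreover obtain k where "rank (S - D\<^sub>0) \<le> rank (H (r k))"
    using eventually_compose_filterlim[OF eventually_rank_ge H_lim]
    by (auto simp: eventually_sequentially)
  ultimately show ?thesis by (meson order_trans)
qed

lemma lower_semicontinuous_mr_plus:
  "lower_semicontinuous_on (psd_set :: (real^'n^'n) set) (\<lambda>S. real (mr_plus S))"
proof (rule lower_semicontinuous_onI_sequentially)
  fix S and \<Sigma> :: "nat \<Rightarrow> real^'n^'n"
  assume "\<And>k. \<Sigma> k \<in> psd_set" and lim: "\<Sigma> \<longlonglongrightarrow> S"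
  then have "psd (\<Sigma> k)" for k by (simp add: psd_set_def)
  then have "\<exists>D H. \<Sigma> k = D + H \<and> psd D \<and> psd H \<and> diagonal_mat D \<and> rank H = mr_plus (\<Sigma> k)" for k
    by (rule mr_plus_attained) blast
  then obtain D H where decomp: "\<And>k. \<Sigma> k = D k + H k" "\<And>k. psd (D k)" "\<And>k. psd (H k)"
      "\<And>k. diagonal_mat (D k)" and optimal: "\<And>k. rank (H k) = mr_plus (\<Sigma> k)"
    by metis
  obtain k where "mr_plus S \<le> rank (H k)" using mr_plus_limit_le_rank[OF lim decomp] by blast
  then show "\<exists>k. real (mr_plus S) \<le> real (mr_plus (\<Sigma> k))" by (auto simp: optimal)
qed

definition counterexample_mat :: "real \<Rightarrow> real^3^3" where
  "counterexample_mat a = vector [vector [3, a, 1], vector [a, 3, 1], vector [1, 1, 3]]"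

definition outer_self :: "real^'n \<Rightarrow> real^'n^'n" where
  "outer_self v = (\<chi> i j. v $ i * v $ j)"

lemma psd_counterexample_mat:
  assumes "0 \<le> a" "a \<le> 1"
  shows "psd (counterexample_mat a)"
proof -
  have "symmetric_mat (counterexample_mat a)"
    by (simp add: symmetric_mat_def vec_eq_iff forall_3 transpose_def counterexample_mat_def)
  moreover have "0 \<le> x \<bullet> (counterexample_mat a *v x)" for x
  proof -
    have "x \<bullet> (counterexample_mat a *v x) = (x$1 + x$3)\<^sup>2 + (x$2 + x$3)\<^sup>2 + (x$1 + a * x$2)\<^sup>2
            + (x$1)\<^sup>2 + (2 - a\<^sup>2) * (x$2)\<^sup>2 + (x$3)\<^sup>2"
      by (simp add: counterexample_mat_def inner_vec_def matrix_vector_mult_def sum_3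
                    power2_eq_square algebra_simps)
    moreover have "a\<^sup>2 \<le> 1" using assms by (simp add: power_le_one)
    ultimately show ?thesis by simp
  qed
  ultimately show ?thesis by (simp add: psd_def)
qed

lemma psd_outer_self: "psd (outer_self v)"
proof -
  have "x \<bullet> (outer_self v *v x) = (v \<bullet> x)\<^sup>2" for x
    by (simp add: outer_self_def inner_vec_def matrix_vector_mult_def power2_eq_square
                  sum_distrib_left sum_distrib_right algebra_simps)
  then show ?thesis
    by (simp add: psd_def symmetric_mat_def vec_eq_iff transpose_def outer_self_def mult.commute)
qed

lemma rank_outer_self_le: "rank (outer_self v) \<le> 1"
proof -
  have "outer_self v *v x = (v \<bullet> x) *\<^sub>R v" for x
    by (simp add: outer_self_def vec_eq_iff matrix_vector_mult_def inner_vec_def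
                  sum_distrib_left algebra_simps)
  then have "range ((*v) (outer_self v)) \<subseteq> span {v}"
    by (auto intro: span_mul span_base)
  then have "dim (range ((*v) (outer_self v))) \<le> dim (span {v})" by (rule dim_subset)
  also have "\<dots> \<le> 1" by simp
  finally show ?thesis by (simp add: rank_dim_range)
qed

lemma mr_counterexample_mat_le_1:
  assumes "0 < a"
  shows "mr (counterexample_mat a) \<le> 1"
proof -
  define v :: "real^3" where "v = vector [sqrt a, sqrt a, 1 / sqrt a]"
  have "sqrt a * sqrt a = a" "sqrt a \<noteq> 0" using assms by simp_all
  then have "diagonal_mat (counterexample_mat a - outer_self v)"
    by (simp add: diagonal_mat_def forall_3 counterexample_mat_def outer_self_def v_def)
  then have "mr (counterexample_mat a) \<le> rank (outer_self v)"
    by (intro mr_le[of _ "counterexample_mat a - outer_self v"]) (simp_all add: psd_outer_self)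
  then show ?thesis using rank_outer_self_le[of v] by linarith
qed

lemma rank_ge_2_of_counterexample_mat_0_decomposition:
  fixes D H :: "real^3^3"
  assumes "counterexample_mat 0 = D + H" "diagonal_mat D"
  shows "2 \<le> rank H"
proof -
  have H: "H $ i $ j = counterexample_mat 0 $ i $ j" if "i \<noteq> j" for i j
    using assms that by (simp add: diagonal_mat_def vec_eq_iff)
  define u where "u = H *v axis 1 1"
  define w where "w = H *v axis 3 1"
  have "u $ 2 = 0" "u $ 3 = 1" "w $ 2 = 1"
    by (simp_all add: u_def w_def matrix_vector_mult_basis column_def H counterexample_mat_def)
  then have "u \<notin> span {w}" "w \<noteq> 0" "u \<noteq> w"
    by (auto simp: span_singleton)
  then have "independent {u, w}" by (simp add: independent_insert)
  then have "card {u, w} \<le> dim (range ((*v) H))"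
    by (rule independent_card_le_dim[rotated]) (auto simp: u_def w_def)
  then show ?thesis using \<open>u \<noteq> w\<close> by (simp add: rank_dim_range)
qed

lemma not_lower_semicontinuous_mr:
  "\<not> lower_semicontinuous_on (psd_set :: (real^3^3) set) (\<lambda>S. real (mr S))"
proof
  assume lsc: "lower_semicontinuous_on (psd_set :: (real^3^3) set) (\<lambda>S. real (mr S))"
  have "counterexample_mat 0 \<in> psd_set" using psd_counterexample_mat[of 0] by (simp add: psd_set_def)
  moreover have "2 \<le> mr (counterexample_mat 0)"
    by (intro mr_ge psd_counterexample_mat rank_ge_2_of_counterexample_mat_0_decomposition) auto
  then have "1 < real (mr (counterexample_mat 0))" by simp
  ultimately have ev: "\<forall>\<^sub>F S in at (counterexample_mat 0) within psd_set. 1 < real (mr S)"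
    by (rule lsc[unfolded lower_semicontinuous_on_def, rule_format])
  define a where "a k = inverse (real (Suc k))" for k
  have a: "0 < a k" "a k \<le> 1" for k by (simp_all add: a_def inverse_eq_divide)
  have affine: "counterexample_mat b = counterexample_mat 0 + b *\<^sub>R (counterexample_mat 1 - counterexample_mat 0)" for b
    by (simp add: counterexample_mat_def vec_eq_iff forall_3)
  have "(\<lambda>k. counterexample_mat 0 + a k *\<^sub>R (counterexample_mat 1 - counterexample_mat 0))
          \<longlonglongrightarrow> counterexample_mat 0 + 0 *\<^sub>R (counterexample_mat 1 - counterexample_mat 0)"
    unfolding a_def by (intro tendsto_intros LIMSEQ_inverse_real_of_nat)
  then have "(\<lambda>k. counterexample_mat (a k)) \<longlonglongrightarrow> counterexample_mat 0"
    by (simp add: affine[symmetric])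
  moreover have "counterexample_mat (a k) $ 1 $ 2 \<noteq> counterexample_mat 0 $ 1 $ 2" for k
    using a(1)[of k] by (simp add: counterexample_mat_def)
  then have "counterexample_mat (a k) \<noteq> counterexample_mat 0" for k by metis
  ultimately have "filterlim (\<lambda>k. counterexample_mat (a k)) (at (counterexample_mat 0) within psd_set) sequentially"
    unfolding filterlim_at using psd_counterexample_mat a by (auto simp: psd_set_def less_imp_le)
  from eventually_compose_filterlim[OF ev this]
  obtain k where "1 < real (mr (counterexample_mat (a k)))"
    by (auto simp: eventually_sequentially)
  then show False using mr_counterexample_mat_le_1[OF a(1)] by (metis not_le of_nat_le_1_iff)
qed

theorem proposition1:
  shows "lower_semicontinuous_on (psd_set :: (real^'n^'n) set) (\<lambda>S. real (mr_plus S))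
         \<and> \<not> lower_semicontinuous_on (psd_set :: (real^3^3) set) (\<lambda>S. real (mr S))"
  using lower_semicontinuous_mr_plus not_lower_semicontinuous_mr by blast

end
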